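(* Let $(X,d)$ be a complete metric space and let $T\colon X\to X$ satisfy (CM): for all $x,y\in X$, $x\neq y$ implies $d(Tx,Ty)<\frac{1}{2}\{d(x,Tx)+d(y,Ty)\}$. Then the following are equivalent: (i) $\lim_{n\to\infty}d(T^nx,T^{n+1}x)=0$ for every $x\in X$; (ii) $T$ has a unique fixed point $z\in X$ and the sequence $(T^nx)_n$ converges to $z$ for every $x\in X$.
   Context: $T^n$ denotes the $n$-fold composition of $T$. *)

theory Defs
  imports "HOL-Analysis.Analysis"
begin

end

theory Submission
  imports Defs
begin

text \<open>
  Applying (CM) to x and y and the triangle inequality gives
  d(x,y) \<le> 3/2 (d(x,Tx) + d(y,Ty)), so any sequence whose displacement d(x_n,Tx_n) tends
  to 0 is Cauchy; its limit z satisfies d(z,Tz) \<le> 2 d(z,x_n) + 3 d(x_n,Tx_n), hence is fixed.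
  Applied to the orbit of x this gives (i) \<Longrightarrow> (ii), and (CM) forbids two distinct fixed
  points. Conversely, a convergent orbit has vanishing displacement.
\<close>

definition kannan_contraction :: "('a::metric_space \<Rightarrow> 'a) \<Rightarrow> bool" where
  "kannan_contraction T \<longleftrightarrow>
     (\<forall>x y. x \<noteq> y \<longrightarrow> dist (T x) (T y) < (dist x (T x) + dist y (T y)) / 2)"

lemma kannan_contraction_dist_le:
  assumes "kannan_contraction T"
  shows "dist (T x) (T y) \<le> (dist x (T x) + dist y (T y)) / 2"
  using assms unfolding kannan_contraction_def
  by (cases "x = y") (auto simp: less_imp_le)

lemma kannan_contraction_fixed_point_unique:
  assumes "kannan_contraction T" "T z = z" "T w = w"
  shows "z = w"
proof (rule ccontr)
  assume "z \<noteq> w"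
  with assms have "dist (T z) (T w) < 0"
    unfolding kannan_contraction_def by fastforce
  then show False
    by simp
qed

lemma kannan_contraction_dist_le_displacements:
  assumes "kannan_contraction T"
  shows "dist x y \<le> 3/2 * (dist x (T x) + dist y (T y))"
proof -
  have "dist x y \<le> dist x (T x) + dist (T x) (T y) + dist (T y) y"
    using dist_triangle[of x y "T x"] dist_triangle[of "T x" y "T y"] by linarith
  with kannan_contraction_dist_le[OF assms, of x y] show ?thesis
    by (simp add: dist_commute)
qed

lemma kannan_contraction_Cauchy:
  assumes T: "kannan_contraction T"
    and displacement: "(\<lambda>n. dist (X n) (T (X n))) \<longlonglongrightarrow> 0"
  shows "Cauchy X"
proof (rule metric_CauchyI)
  fix e :: real
  assume "e > 0"
  then obtain M where M: "\<And>n. n \<ge> M \<Longrightarrow> dist (X n) (T (X n)) < e / 3"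
    using LIMSEQ_D[OF displacement, of "e / 3"] by auto
  have "dist (X m) (X n) < e" if "m \<ge> M" "n \<ge> M" for m n
    using kannan_contraction_dist_le_displacements[OF T, of "X m" "X n"] M[OF that(1)] M[OF that(2)]
    by argo
  then show "\<exists>M. \<forall>m\<ge>M. \<forall>n\<ge>M. dist (X m) (X n) < e"
    by blast
qed

lemma kannan_contraction_limit_fixed_point:
  assumes T: "kannan_contraction T"
    and X: "X \<longlonglongrightarrow> z"
    and displacement: "(\<lambda>n. dist (X n) (T (X n))) \<longlonglongrightarrow> 0"
  shows "T z = z"
proof -
  have bound: "dist z (T z) \<le> 2 * dist z (X n) + 3 * dist (X n) (T (X n))" for n
  proof -
    have "dist z (T z) \<le> dist z (X n) + dist (X n) (T (X n)) + dist (T (X n)) (T z)"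
      using dist_triangle[of z "T z" "X n"] dist_triangle[of "X n" "T z" "T (X n)"] by linarith
    with kannan_contraction_dist_le[OF T, of "X n" z] show ?thesis
      by (simp add: dist_commute)
  qed
  have "(\<lambda>n. 2 * dist z (X n) + 3 * dist (X n) (T (X n))) \<longlonglongrightarrow> 2 * dist z z + 3 * 0"
    by (intro tendsto_intros X displacement)
  then have "dist z (T z) \<le> 0"
    using bound by (intro LIMSEQ_le_const[of _ 0]) auto
  then show ?thesis
    by simp
qed

lemma kannan_contraction_iterates_converge:
  fixes T :: "'a::complete_space \<Rightarrow> 'a"
  assumes T: "kannan_contraction T"
    and displacement: "(\<lambda>n. dist ((T ^^ n) x) ((T ^^ Suc n) x)) \<longlonglongrightarrow> 0"
  shows "\<exists>z. T z = z \<and> (\<lambda>n. (T ^^ n) x) \<longlonglongrightarrow> z"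
proof -
  have orbit: "(\<lambda>n. dist ((T ^^ n) x) (T ((T ^^ n) x))) \<longlonglongrightarrow> 0"
    using displacement by simp
  obtain z where "(\<lambda>n. (T ^^ n) x) \<longlonglongrightarrow> z"
    using kannan_contraction_Cauchy[OF T orbit] Cauchy_convergent_iff convergent_def by blast
  with kannan_contraction_limit_fixed_point[OF T _ orbit] show ?thesis
    by blast
qed

lemma iterates_converge_imp_displacement_tendsto_0:
  assumes "(\<lambda>n. (T ^^ n) x) \<longlonglongrightarrow> z"
  shows "(\<lambda>n. dist ((T ^^ n) x) ((T ^^ Suc n) x)) \<longlonglongrightarrow> 0"
  using tendsto_dist[OF assms LIMSEQ_Suc[OF assms]] by simp

theorem theorem5p2:
  fixes T :: "'a::complete_space \<Rightarrow> 'a"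
  assumes CM: "\<And>x y. x \<noteq> y \<Longrightarrow> dist (T x) (T y) < (dist x (T x) + dist y (T y)) / 2"
  shows "(\<forall>x. (\<lambda>n. dist ((T ^^ n) x) ((T ^^ Suc n) x)) \<longlonglongrightarrow> 0)
     \<longleftrightarrow> (\<exists>!z. T z = z) \<and> (\<exists>z. T z = z \<and> (\<forall>x. (\<lambda>n. (T ^^ n) x) \<longlonglongrightarrow> z))"
proof
  have T: "kannan_contraction T"
    using CM unfolding kannan_contraction_def by blast
  assume "\<forall>x. (\<lambda>n. dist ((T ^^ n) x) ((T ^^ Suc n) x)) \<longlonglongrightarrow> 0"
  then have converge: "\<exists>z. T z = z \<and> (\<lambda>n. (T ^^ n) x) \<longlonglongrightarrow> z" for x
    using kannan_contraction_iterates_converge[OF T] by blast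
  then obtain z where z: "T z = z"
    by blast
  have unique: "w = z" if "T w = w" for w
    using kannan_contraction_fixed_point_unique[OF T that z] .
  have "(\<lambda>n. (T ^^ n) x) \<longlonglongrightarrow> z" for x
    using converge[of x] unique by blast
  with z unique show "(\<exists>!z. T z = z) \<and> (\<exists>z. T z = z \<and> (\<forall>x. (\<lambda>n. (T ^^ n) x) \<longlonglongrightarrow> z))"
    by blast
next
  assume "(\<exists>!z. T z = z) \<and> (\<exists>z. T z = z \<and> (\<forall>x. (\<lambda>n. (T ^^ n) x) \<longlonglongrightarrow> z))"
  then obtain z where orbit: "\<And>x. (\<lambda>n. (T ^^ n) x) \<longlonglongrightarrow> z"
    by blast
  show "\<forall>x. (\<lambda>n. dist ((T ^^ n) x) ((T ^^ Suc n) x)) \<longlonglongrightarrow> 0"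
    using iterates_converge_imp_displacement_tendsto_0[OF orbit] by blast
qed

end
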